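(* If $\mathcal G$ is a projective Fraïssé family of connected finite graphs with confluent epimorphisms, then its projective Fraïssé limit is Kelley.
   Context: A graph is a pair $(V,E)$ with $E\subseteq V^2$ reflexive and symmetric; an epimorphism is a vertex map sending edges to edges and surjective on vertices and edges. A topological graph has a compact, zero-dimensional, second-countable (metrizable) vertex set and a closed edge set. A vertex set $S$ is disconnected if $S=P\cup Q$ with $P,Q$ nonempty disjoint closed and no edge between; otherwise connected; components are maximal connected subsets. An epimorphism $f$ is confluent if for each closed connected $Q$ in the target every component $K$ of $f^{-1}(Q)$ satisfies $f(K)=Q$. A topological graph $X$ with a compatible metric is Kelley if $X$ is connected and for every closed connected $K\subseteq X$, every vertex $p\in K$ and every sequence of vertices $p_n\to p$ there are closed connected sets $K_n$ with $p_n\in K_n$ and $K_n\to K$ in the Hausdorff metric. A projective Fraïssé family is a class of finite graphs with a fixed class of epimorphisms, countably many isomorphism types, closed under composition with identities, with the joint projection property and amalgamation property ($f\colon B\to A$, $g\colon C\to A$ fixed give $D$ and fixed $f_0,g_0$ with $f\circ f_0=g\circ g_0$). Its projective Fraïssé limit is the unique topological graph $\mathbb F=\varprojlim\{F_n,\alpha_n\}$ (members of the family, fixed bonding maps, edges coordinatewise) such that every member is an image of $\mathbb F$ under an admissible epimorphism and for admissible $f\colon\mathbb F\to A$ and fixed $g\colon B\to A$ there is admissible $h$ with $f=g\circ h$, admissible meaning $h'\circ\alpha^\infty_m$ with $h'$ fixed. *)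

theory Defs
  imports "HOL-Analysis.Analysis"
begin

type_synonym fgraph = "nat set \<times> (nat \<times> nat) set"

definition is_graph :: "'a set \<Rightarrow> ('a \<times> 'a) set \<Rightarrow> bool" where
  "is_graph V E \<longleftrightarrow> E \<subseteq> V \<times> V \<and> (\<forall>x\<in>V. (x, x) \<in> E) \<and> (\<forall>x y. (x, y) \<in> E \<longrightarrow> (y, x) \<in> E)"

definition epimorphism ::
  "'a set \<Rightarrow> ('a \<times> 'a) set \<Rightarrow> 'b set \<Rightarrow> ('b \<times> 'b) set \<Rightarrow> ('a \<Rightarrow> 'b) \<Rightarrow> bool" where
  "epimorphism VB EB VA EA f \<longleftrightarrow>
     f ` VB = VA \<and> (\<forall>(x, y) \<in> EB. (f x, f y) \<in> EA) \<and> EA \<subseteq> (\<lambda>(x, y). (f x, f y)) ` EB"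

definition graph_iso :: "fgraph \<Rightarrow> fgraph \<Rightarrow> bool" where
  "graph_iso A B \<longleftrightarrow> (\<exists>f. bij_betw f (fst A) (fst B) \<and>
     (\<forall>x\<in>fst A. \<forall>y\<in>fst A. (x, y) \<in> snd A \<longleftrightarrow> (f x, f y) \<in> snd B))"

text \<open>Graph-theoretic (dis)connectedness of a vertex set S w.r.t. edge set E;
  closedness is taken relative to S (for finite graphs everything is closed).\<close>
definition g_connected :: "('a::topological_space \<times> 'a) set \<Rightarrow> 'a set \<Rightarrow> bool" where
  "g_connected E S \<longleftrightarrow> \<not> (\<exists>P Q. P \<noteq> {} \<and> Q \<noteq> {} \<and> P \<inter> Q = {} \<and> S = P \<union> Q \<and>
      closedin (top_of_set S) P \<and> closedin (top_of_set S) Q \<and>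
      (\<forall>p\<in>P. \<forall>q\<in>Q. (p, q) \<notin> E))"

definition g_component :: "('a::topological_space \<times> 'a) set \<Rightarrow> 'a set \<Rightarrow> 'a set \<Rightarrow> bool" where
  "g_component E S K \<longleftrightarrow> K \<subseteq> S \<and> g_connected E K \<and>
     (\<forall>L. K \<subseteq> L \<and> L \<subseteq> S \<and> g_connected E L \<longrightarrow> L = K)"

definition confluent :: "fgraph \<Rightarrow> fgraph \<Rightarrow> (nat \<Rightarrow> nat) \<Rightarrow> bool" where
  "confluent B A f \<longleftrightarrow> epimorphism (fst B) (snd B) (fst A) (snd A) f \<and>
     (\<forall>Q. Q \<subseteq> fst A \<and> closed Q \<and> g_connected (snd A) Q \<longrightarrow>
        (\<forall>K. g_component (snd B) {x \<in> fst B. f x \<in> Q} K \<longrightarrow> f ` K = Q))"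

text \<open>A projective Fraisse family: a class G of finite graphs together with a class
  of fixed epimorphisms; M B A f means that f : B \<rightarrow> A is a fixed epimorphism.\<close>
definition proj_fraisse_family :: "fgraph set \<Rightarrow> (fgraph \<Rightarrow> fgraph \<Rightarrow> (nat \<Rightarrow> nat) \<Rightarrow> bool) \<Rightarrow> bool" where
  "proj_fraisse_family G M \<longleftrightarrow>
     (\<forall>A\<in>G. is_graph (fst A) (snd A) \<and> finite (fst A)) \<and>
     (\<forall>B A f. M B A f \<longrightarrow> B \<in> G \<and> A \<in> G \<and> epimorphism (fst B) (snd B) (fst A) (snd A) f) \<and>
     (\<exists>C. countable C \<and> C \<subseteq> G \<and> (\<forall>A\<in>G. \<exists>B\<in>C. graph_iso A B)) \<and>
     (\<forall>A\<in>G. M A A id) \<and>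
     (\<forall>A B C f g. M C B g \<and> M B A f \<longrightarrow> M C A (f \<circ> g)) \<and>
     (\<forall>A\<in>G. \<forall>B\<in>G. \<exists>C\<in>G. \<exists>f g. M C A f \<and> M C B g) \<and>
     (\<forall>A B C f g. M B A f \<and> M C A g \<longrightarrow>
        (\<exists>D\<in>G. \<exists>f0 g0. M D B f0 \<and> M D C g0 \<and> (\<forall>x\<in>fst D. f (f0 x) = g (g0 x))))"

text \<open>Inverse limit of a sequence Fs with bonding maps \<alpha> n : Fs (Suc n) \<rightarrow> Fs n,
  as a subspace of the product space nat \<Rightarrow> nat (product topology of discrete nat);
  edges are defined coordinatewise.\<close>
definition inv_lim_V :: "(nat \<Rightarrow> fgraph) \<Rightarrow> (nat \<Rightarrow> nat \<Rightarrow> nat) \<Rightarrow> (nat \<Rightarrow> nat) set" where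
  "inv_lim_V Fs \<alpha> = {x. \<forall>n. x n \<in> fst (Fs n) \<and> \<alpha> n (x (Suc n)) = x n}"

definition inv_lim_E :: "(nat \<Rightarrow> fgraph) \<Rightarrow> (nat \<Rightarrow> nat \<Rightarrow> nat) \<Rightarrow> ((nat \<Rightarrow> nat) \<times> (nat \<Rightarrow> nat)) set" where
  "inv_lim_E Fs \<alpha> = {(x, y). x \<in> inv_lim_V Fs \<alpha> \<and> y \<in> inv_lim_V Fs \<alpha> \<and> (\<forall>n. (x n, y n) \<in> snd (Fs n))}"

definition admissible ::
  "(fgraph \<Rightarrow> fgraph \<Rightarrow> (nat \<Rightarrow> nat) \<Rightarrow> bool) \<Rightarrow> (nat \<Rightarrow> fgraph) \<Rightarrow> (nat \<Rightarrow> nat \<Rightarrow> nat) \<Rightarrow>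
   fgraph \<Rightarrow> ((nat \<Rightarrow> nat) \<Rightarrow> nat) \<Rightarrow> bool" where
  "admissible M Fs \<alpha> A h \<longleftrightarrow>
     (\<exists>m h'. M (Fs m) A h' \<and> (\<forall>x\<in>inv_lim_V Fs \<alpha>. h x = h' (x m)))"

definition is_proj_fraisse_limit ::
  "fgraph set \<Rightarrow> (fgraph \<Rightarrow> fgraph \<Rightarrow> (nat \<Rightarrow> nat) \<Rightarrow> bool) \<Rightarrow> (nat \<Rightarrow> fgraph) \<Rightarrow> (nat \<Rightarrow> nat \<Rightarrow> nat) \<Rightarrow> bool" where
  "is_proj_fraisse_limit G M Fs \<alpha> \<longleftrightarrow>
     (\<forall>n. M (Fs (Suc n)) (Fs n) (\<alpha> n)) \<and>
     (\<forall>A\<in>G. \<exists>h. admissible M Fs \<alpha> A h \<and>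
        epimorphism (inv_lim_V Fs \<alpha>) (inv_lim_E Fs \<alpha>) (fst A) (snd A) h) \<and>
     (\<forall>A B f g. A \<in> G \<and> admissible M Fs \<alpha> A f \<and> M B A g \<longrightarrow>
        (\<exists>h. admissible M Fs \<alpha> B h \<and> (\<forall>x\<in>inv_lim_V Fs \<alpha>. f x = g (h x))))"

definition hausdorff_dist :: "('a \<Rightarrow> 'a \<Rightarrow> real) \<Rightarrow> 'a set \<Rightarrow> 'a set \<Rightarrow> real" where
  "hausdorff_dist d A B =
     max (SUP a\<in>A. INF b\<in>B. d a b) (SUP b\<in>B. INF a\<in>A. d a b)"

definition kelley :: "'a::topological_space set \<Rightarrow> ('a \<times> 'a) set \<Rightarrow> bool" where
  "kelley V E \<longleftrightarrow> g_connected E V \<and>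
     (\<forall>d. Metric_space V d \<and> Metric_space.mtopology V d = top_of_set V \<longrightarrow>
       (\<forall>K p pn. K \<subseteq> V \<and> closedin (top_of_set V) K \<and> g_connected E K \<and> p \<in> K \<and>
           (\<forall>n. pn n \<in> V) \<and> pn \<longlonglongrightarrow> p \<longrightarrow>
          (\<exists>Kn. (\<forall>n. Kn n \<subseteq> V \<and> closedin (top_of_set V) (Kn n) \<and> g_connected E (Kn n) \<and>
                     pn n \<in> Kn n) \<and>
                (\<lambda>n. hausdorff_dist d (Kn n) K) \<longlonglongrightarrow> 0)))"

end

theory Submission
  imports Defs
begin

(* The limit is the space of threads of the sequence F 0 <- F 1 <- ... of finite graphs. By
   compactness, threads that agree at a sufficiently high coordinate N are uniformly d-close, so
   two sets of threads with the same N-th projection are Hausdorff-close. Given a connected K,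
   p in K and p n -> p, let k be the largest level up to n at which p n agrees with p. Start from
   the connected k-th projection of K, which contains the k-th coordinate of p n, and take at
   every higher level the component of the preimage of the previous set that contains the
   coordinate of p n. Confluence makes each bonding map send such a component onto the previous
   set, so the threads through these components form a closed connected set K n containing p n
   with the same k-th projection as K. As k tends to infinity with n, K n tends to K. *)

section \<open>Products of discrete spaces\<close>

lemma closed_discrete: "closed (S::'a::discrete_topology set)"
  by (simp add: closed_def open_discrete)

lemma closed_coordinate_preimage: "closed {x::'a \<Rightarrow> 'b::discrete_topology. x j \<in> B}"
  using continuous_on_closed_vimage[of UNIV "\<lambda>x::'a \<Rightarrow> 'b. x j"] closed_discrete[of B]
  by (simp add: vimage_def)

lemma closed_coordinate_eq: "closed {x::'a \<Rightarrow> 'b::discrete_topology. f (x i) = x j}"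
proof -
  have "continuous_on UNIV (\<lambda>x::'a \<Rightarrow> 'b. f (x i))"
    using continuous_on_compose[of UNIV "\<lambda>x::'a \<Rightarrow> 'b. x i" f]
    by (simp add: o_def continuous_on_product_coordinates continuous_on_discrete)
  then show ?thesis
    by (rule closed_Collect_eq[OF _ continuous_on_product_coordinates, simplified])
qed

lemma closed_singleton_fun: "closed {x::'a \<Rightarrow> 'b::discrete_topology}"
proof -
  have "closed (\<Inter>j. {y::'a \<Rightarrow> 'b. y j \<in> {x j}})"
    by (intro closed_INT ballI closed_coordinate_preimage)
  moreover have "{x} = (\<Inter>j. {y. y j \<in> {x j}})"
    by auto
  ultimately show ?thesis
    by (simp only:)
qed

lemma tendsto_coordinate_eventually:
  fixes a :: "'c \<Rightarrow> 'a \<Rightarrow> 'b::discrete_topology"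
  assumes "(a \<longlongrightarrow> x) F"
  shows "eventually (\<lambda>k. a k j = x j) F"
proof -
  have "((\<lambda>k. a k j) \<longlongrightarrow> x j) F"
    by (rule continuous_on_tendsto_compose[OF continuous_on_product_coordinates[of j] assms])
      simp_all
  then show ?thesis
    by (rule tendsto_discrete[THEN iffD1])
qed

lemma compact_PiE_finite:
  assumes "\<And>i. finite (F i)"
  shows "compact (PiE UNIV F :: ('a \<Rightarrow> 'b::discrete_topology) set)"
proof -
  have "compactin (product_topology (\<lambda>i. euclidean) UNIV) (PiE UNIV F)"
    using assms by (auto simp: compactin_PiE finite_imp_compact)
  then show ?thesis
    by (simp add: euclidean_product_topology)
qed

lemma seq_compact_pair:
  fixes A B :: "nat \<Rightarrow> 'a::first_countable_topology"
  assumes "compact P" "compact Q" "\<And>t. A t \<in> P" "\<And>t. B t \<in> Q"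
  obtains a b r where "a \<in> P" "b \<in> Q" "strict_mono r" "(A \<circ> r) \<longlonglongrightarrow> a" "(B \<circ> r) \<longlonglongrightarrow> b"
proof -
  have "seq_compact (P \<times> Q)"
    using assms(1,2) by (intro compact_imp_seq_compact compact_Times)
  moreover have "\<And>t. (A t, B t) \<in> P \<times> Q"
    using assms(3,4) by simp
  ultimately obtain ab r where ab: "ab \<in> P \<times> Q" "strict_mono r"
    and lim: "((\<lambda>t. (A t, B t)) \<circ> r) \<longlonglongrightarrow> ab"
    unfolding seq_compact_def by meson
  have "(A \<circ> r) \<longlonglongrightarrow> fst ab" "(B \<circ> r) \<longlonglongrightarrow> snd ab"
    using tendsto_fst[OF lim] tendsto_snd[OF lim] by (simp_all add: o_def)
  moreover have "fst ab \<in> P" "snd ab \<in> Q"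
    using ab(1) by auto
  ultimately show ?thesis
    using that ab(2) by blast
qed

section \<open>Graph-theoretic connectedness\<close>

lemma g_connectedI:
  assumes "\<And>P Q. P \<noteq> {} \<Longrightarrow> Q \<noteq> {} \<Longrightarrow> P \<inter> Q = {} \<Longrightarrow> T = P \<union> Q \<Longrightarrow>
      closedin (top_of_set T) P \<Longrightarrow> closedin (top_of_set T) Q \<Longrightarrow> \<exists>p\<in>P. \<exists>q\<in>Q. (p, q) \<in> E"
  shows "g_connected E T"
  unfolding g_connected_def
proof (intro notI, elim exE conjE)
  fix P Q
  assume "P \<noteq> {}" "Q \<noteq> {}" "P \<inter> Q = {}" "T = P \<union> Q"
    "closedin (top_of_set T) P" "closedin (top_of_set T) Q" "\<forall>p\<in>P. \<forall>q\<in>Q. (p, q) \<notin> E"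
  then show False
    using assms[of P Q] by blast
qed

lemma g_connectedD:
  assumes "g_connected E T" "P \<noteq> {}" "Q \<noteq> {}" "P \<inter> Q = {}" "T = P \<union> Q"
    "closedin (top_of_set T) P" "closedin (top_of_set T) Q"
  shows "\<exists>p\<in>P. \<exists>q\<in>Q. (p, q) \<in> E"
proof (rule ccontr)
  assume "\<not> ?thesis"
  then have "\<forall>p\<in>P. \<forall>q\<in>Q. (p, q) \<notin> E"
    by blast
  then show False
    using assms unfolding g_connected_def by blast
qed

lemma g_connected_discreteD:
  fixes T :: "'a::discrete_topology set"
  assumes "g_connected E T" "P \<noteq> {}" "Q \<noteq> {}" "P \<inter> Q = {}" "T = P \<union> Q"
  shows "\<exists>p\<in>P. \<exists>q\<in>Q. (p, q) \<in> E"
proof -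
  have "P \<subseteq> T" "Q \<subseteq> T"
    using assms(5) by blast+
  then show ?thesis
    using g_connectedD[OF assms] closed_subset[OF _ closed_discrete] by blast
qed

lemma g_connected_singleton: "g_connected E {x}"
proof (rule g_connectedI)
  fix P Q
  assume "P \<noteq> {}" "Q \<noteq> {}" "P \<inter> Q = {}" "{x} = P \<union> Q"
  then have False
    by (metis Int_absorb insert_not_empty singleton_Un_iff)
  then show "\<exists>p\<in>P. \<exists>q\<in>Q. (p, q) \<in> E" ..
qed

lemma closedin_Int_subset:
  assumes "closedin (top_of_set U) P" "T \<subseteq> U"
  shows "closedin (top_of_set T) (T \<inter> P)"
proof -
  obtain C where "closed C" "P = U \<inter> C"
    using assms(1) closedin_closed by meson
  moreover have "T \<inter> (U \<inter> C) = T \<inter> C"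
    using assms(2) by auto
  ultimately show ?thesis
    by (simp add: closedin_closed_Int)
qed

lemma g_connected_Union:
  assumes "\<And>T. T \<in> TT \<Longrightarrow> g_connected E T" "\<And>T. T \<in> TT \<Longrightarrow> x \<in> T"
  shows "g_connected E (\<Union>TT)"
proof (rule g_connectedI)
  fix P Q
  assume PQ: "P \<noteq> {}" "Q \<noteq> {}" "P \<inter> Q = {}" "\<Union>TT = P \<union> Q"
    and cl: "closedin (top_of_set (\<Union>TT)) P" "closedin (top_of_set (\<Union>TT)) Q"
  obtain p q where "p \<in> P" "q \<in> Q"
    using PQ(1,2) by blast
  then obtain Tp Tq where p: "p \<in> P" "p \<in> Tp" "Tp \<in> TT" and q: "q \<in> Q" "q \<in> Tq" "Tq \<in> TT"
    using PQ(4) by (metis Un_iff UnionE)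
  have "x \<in> P \<union> Q"
    using assms(2)[OF p(3)] p(3) PQ(4) by auto
  then obtain T where T: "T \<in> TT" "T \<inter> P \<noteq> {}" "T \<inter> Q \<noteq> {}"
    using assms(2) p q by auto
  have "T \<subseteq> \<Union>TT"
    using T(1) by blast
  then have "closedin (top_of_set T) (T \<inter> P)" "closedin (top_of_set T) (T \<inter> Q)"
    using cl closedin_Int_subset by blast+
  moreover have "T = (T \<inter> P) \<union> (T \<inter> Q)" "(T \<inter> P) \<inter> (T \<inter> Q) = {}"
    using \<open>T \<subseteq> \<Union>TT\<close> PQ(3,4) by auto
  ultimately have "\<exists>p\<in>T \<inter> P. \<exists>q\<in>T \<inter> Q. (p, q) \<in> E"
    using g_connectedD[OF assms(1)[OF T(1)] T(2,3)] by blast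
  then show "\<exists>p\<in>P. \<exists>q\<in>Q. (p, q) \<in> E"
    by auto
qed

lemma g_connected_continuous_image:
  assumes "continuous_on T f"
    and "\<And>x y. x \<in> T \<Longrightarrow> y \<in> T \<Longrightarrow> (x, y) \<in> E1 \<Longrightarrow> (f x, f y) \<in> E2"
    and "g_connected E1 T"
  shows "g_connected E2 (f ` T)"
proof (rule g_connectedI)
  fix P Q
  assume PQ: "P \<noteq> {}" "Q \<noteq> {}" "P \<inter> Q = {}" "f ` T = P \<union> Q"
    and cl: "closedin (top_of_set (f ` T)) P" "closedin (top_of_set (f ` T)) Q"
  have f: "f \<in> T \<rightarrow> f ` T"
    by simp
  obtain p q where "p \<in> P" "q \<in> Q"
    using PQ(1,2) by blast
  moreover have "P \<subseteq> f ` T" "Q \<subseteq> f ` T"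
    using PQ(4) by simp_all
  ultimately obtain s t where "s \<in> T" "f s \<in> P" "t \<in> T" "f t \<in> Q"
    by (metis imageE subsetD)
  then have "T \<inter> f -` P \<noteq> {}" "T \<inter> f -` Q \<noteq> {}"
    by blast+
  moreover have "T = (T \<inter> f -` P) \<union> (T \<inter> f -` Q)" "(T \<inter> f -` P) \<inter> (T \<inter> f -` Q) = {}"
    using PQ(3,4) by auto
  ultimately obtain x y where "x \<in> T" "f x \<in> P" "y \<in> T" "f y \<in> Q" "(x, y) \<in> E1"
    using g_connectedD[OF assms(3)] continuous_closedin_preimage_gen[OF assms(1) f] cl
    by (metis IntE vimageE)
  then show "\<exists>p\<in>P. \<exists>q\<in>Q. (p, q) \<in> E2"
    using assms(2) by blast
qed

definition g_component_of :: "('a::topological_space \<times> 'a) set \<Rightarrow> 'a set \<Rightarrow> 'a \<Rightarrow> 'a set" where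
  "g_component_of E S x = \<Union>{T. T \<subseteq> S \<and> x \<in> T \<and> g_connected E T}"

lemma g_component_of_subset: "g_component_of E S x \<subseteq> S"
  unfolding g_component_of_def by (rule Union_least) simp

lemma g_component_of_maximal:
  assumes "T \<subseteq> S" "x \<in> T" "g_connected E T"
  shows "T \<subseteq> g_component_of E S x"
  unfolding g_component_of_def using assms by (intro Union_upper CollectI conjI)

lemma g_component_of_refl:
  assumes "x \<in> S"
  shows "x \<in> g_component_of E S x"
proof -
  have "{x} \<subseteq> g_component_of E S x"
    using assms by (intro g_component_of_maximal g_connected_singleton) simp_all
  then show ?thesis
    by simp
qed

lemma g_connected_g_component_of: "g_connected E (g_component_of E S x)"
  unfolding g_component_of_def by (rule g_connected_Union[where x = x]) simp_all

lemma g_component_g_component_of: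
  assumes "x \<in> S"
  shows "g_component E S (g_component_of E S x)"
  unfolding g_component_def
proof (intro conjI allI impI)
  fix L
  assume L: "g_component_of E S x \<subseteq> L \<and> L \<subseteq> S \<and> g_connected E L"
  moreover have "x \<in> L"
    using L g_component_of_refl[OF assms] by (meson subsetD)
  ultimately have "L \<subseteq> g_component_of E S x"
    by (intro g_component_of_maximal) simp_all
  then show "L = g_component_of E S x"
    using L by (simp add: subset_antisym)
qed (simp_all add: g_component_of_subset g_connected_g_component_of)

lemma confluent_image_g_component_of:
  assumes "confluent B A f" "Q \<subseteq> fst A" "g_connected (snd A) Q" "x \<in> fst B" "f x \<in> Q"
  shows "f ` g_component_of (snd B) {y \<in> fst B. f y \<in> Q} x = Q"
proof -
  have "g_component (snd B) {y \<in> fst B. f y \<in> Q} (g_component_of (snd B) {y \<in> fst B. f y \<in> Q} x)"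
    using assms(4,5) by (intro g_component_g_component_of) simp
  then show ?thesis
    using assms(1-3) closed_discrete[of Q] unfolding confluent_def by blast
qed

section \<open>Metric estimates\<close>

lemma hausdorff_dist_abs_le:
  assumes "A \<noteq> {}" "B \<noteq> {}" "\<And>a b. 0 \<le> d a b"
    and "\<forall>a\<in>A. \<exists>b\<in>B. d a b \<le> e" "\<forall>b\<in>B. \<exists>a\<in>A. d a b \<le> e"
  shows "\<bar>hausdorff_dist d A B\<bar> \<le> e"
proof -
  have inf_A: "0 \<le> (INF b\<in>B. d a b) \<and> (INF b\<in>B. d a b) \<le> e" if "a \<in> A" for a
    using assms that by (meson bdd_belowI2 cINF_greatest cINF_lower order_trans)
  have inf_B: "0 \<le> (INF a\<in>A. d a b) \<and> (INF a\<in>A. d a b) \<le> e" if "b \<in> B" for b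
    using assms that by (meson bdd_belowI2 cINF_greatest cINF_lower order_trans)
  have "(SUP a\<in>A. INF b\<in>B. d a b) \<le> e" "(SUP b\<in>B. INF a\<in>A. d a b) \<le> e"
    using assms(1,2) inf_A inf_B by (auto intro: cSUP_least)
  moreover obtain a0 where "a0 \<in> A"
    using assms(1) by blast
  then have "0 \<le> (SUP a\<in>A. INF b\<in>B. d a b)"
    using inf_A by (meson bdd_aboveI2 cSUP_upper order_trans)
  ultimately show ?thesis
    unfolding hausdorff_dist_def by auto
qed

lemma Metric_space_eventually_dist_less:
  fixes M :: "'a::topological_space set"
  assumes "Metric_space M d" "Metric_space.mtopology M d = top_of_set M"
    and "\<And>t. z t \<in> M" "x \<in> M" "z \<longlonglongrightarrow> x" "e > 0"
  shows "eventually (\<lambda>t. d (z t) x < e) sequentially"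
proof -
  have "limitin (Metric_space.mtopology M d) z x sequentially"
    using assms(2-5) by (simp add: limitin_subtopology)
  then show ?thesis
    using assms(6) unfolding Metric_space.limitin_metric[OF assms(1)] by (auto elim: eventually_mono)
qed

section \<open>Inverse limits of finite graphs\<close>

locale graph_inverse_system =
  fixes Fs :: "nat \<Rightarrow> fgraph" and \<alpha> :: "nat \<Rightarrow> nat \<Rightarrow> nat"
  assumes finite_level: "\<And>n. finite (fst (Fs n))"
    and epimorphism_bond:
      "\<And>n. epimorphism (fst (Fs (Suc n))) (snd (Fs (Suc n))) (fst (Fs n)) (snd (Fs n)) (\<alpha> n)"
begin

abbreviation limV :: "(nat \<Rightarrow> nat) set" where
  "limV \<equiv> inv_lim_V Fs \<alpha>"

abbreviation limE :: "((nat \<Rightarrow> nat) \<times> (nat \<Rightarrow> nat)) set" where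
  "limE \<equiv> inv_lim_E Fs \<alpha>"

lemma bond_image: "\<alpha> n ` fst (Fs (Suc n)) = fst (Fs n)"
  using epimorphism_bond[of n] unfolding epimorphism_def by (rule conjunct1)

lemma bond_edge: "(a, b) \<in> snd (Fs (Suc n)) \<Longrightarrow> (\<alpha> n a, \<alpha> n b) \<in> snd (Fs n)"
  using epimorphism_bond[of n] unfolding epimorphism_def by blast

lemma thread_level: "x \<in> limV \<Longrightarrow> x n \<in> fst (Fs n)"
  by (simp add: inv_lim_V_def)

lemma thread_bond: "x \<in> limV \<Longrightarrow> \<alpha> n (x (Suc n)) = x n"
  by (simp add: inv_lim_V_def)

definition bond_compatible :: "(nat \<Rightarrow> nat \<Rightarrow> nat \<Rightarrow> bool) \<Rightarrow> bool" where
  "bond_compatible R \<longleftrightarrow> (\<forall>n a b. R (Suc n) a b \<longrightarrow> R n (\<alpha> n a) (\<alpha> n b))"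

lemma bond_compatible_eq: "bond_compatible (\<lambda>_ a b. a = b)"
  by (simp add: bond_compatible_def)

lemma bond_compatible_edge: "bond_compatible (\<lambda>n a b. (a, b) \<in> snd (Fs n))"
  by (simp add: bond_compatible_def bond_edge)

lemma thread_related_down:
  assumes "bond_compatible R" "x \<in> limV" "y \<in> limV" "R k (x k) (y k)" "j \<le> k"
  shows "R j (x j) (y j)"
proof (rule inc_induct[where P = "\<lambda>n. R n (x n) (y n)", OF assms(5)])
  show "R k (x k) (y k)"
    by (fact assms(4))
next
  fix n
  assume "R (Suc n) (x (Suc n)) (y (Suc n))"
  then have "R n (\<alpha> n (x (Suc n))) (\<alpha> n (y (Suc n)))"
    using assms(1) unfolding bond_compatible_def by blast
  then show "R n (x n) (y n)"
    using assms(2,3) by (simp add: thread_bond)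
qed

lemma thread_eq_down:
  assumes "x \<in> limV" "y \<in> limV" "x k = y k" "j \<le> k"
  shows "x j = y j"
  using thread_related_down[OF bond_compatible_eq assms] .

lemma closed_limV: "closed limV"
proof -
  have "limV = (\<Inter>n. {x. x n \<in> fst (Fs n)} \<inter> {x. \<alpha> n (x (Suc n)) = x n})"
    by (auto simp: inv_lim_V_def)
  moreover have "closed (\<Inter>n. {x. x n \<in> fst (Fs n)} \<inter> {x. \<alpha> n (x (Suc n)) = x n})"
    by (intro closed_INT ballI closed_Int closed_coordinate_preimage closed_coordinate_eq)
  ultimately show ?thesis
    by (simp only:)
qed

lemma compact_limV: "compact limV"
proof -
  have "limV = PiE UNIV (\<lambda>n. fst (Fs n)) \<inter> limV"
    by (auto simp: inv_lim_V_def PiE_def)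
  then show ?thesis
    using compact_Int_closed[OF compact_PiE_finite[of "\<lambda>n. fst (Fs n)", OF finite_level] closed_limV] by simp
qed

lemma compact_if_closed_subset_limV: "closed S \<Longrightarrow> S \<subseteq> limV \<Longrightarrow> compact S"
  using compact_Int_closed[OF compact_limV, of S] by (simp add: inf.absorb2)

lemma exists_thread_extending:
  assumes "\<And>n. N \<le> n \<Longrightarrow> y n \<in> fst (Fs n)" "\<And>n. N \<le> n \<Longrightarrow> \<alpha> n (y (Suc n)) = y n"
  shows "\<exists>x\<in>limV. \<forall>n\<ge>N. x n = y n"
  using assms
proof (induction N arbitrary: y)
  case 0
  then have "y \<in> limV"
    by (simp add: inv_lim_V_def)
  then show ?case
    by blast
next
  case (Suc N)
  define y' where "y' = y(N := \<alpha> N (y (Suc N)))"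
  have "y' n \<in> fst (Fs n) \<and> \<alpha> n (y' (Suc n)) = y' n" if "N \<le> n" for n
  proof (cases "n = N")
    case True
    then show ?thesis
      using Suc.prems(1)[of "Suc N"] bond_image[of N] by (auto simp: y'_def)
  next
    case False
    then show ?thesis
      using that Suc.prems[of n] by (simp add: y'_def)
  qed
  then obtain x where x: "x \<in> limV" "\<forall>n\<ge>N. x n = y' n"
    using Suc.IH[of y'] by blast
  have "x n = y n" if "Suc N \<le> n" for n
    using x(2) that by (simp add: y'_def)
  with x(1) show ?case
    by blast
qed

definition surjective_subsystem :: "nat \<Rightarrow> (nat \<Rightarrow> nat set) \<Rightarrow> bool" where
  "surjective_subsystem m C \<longleftrightarrow> (\<forall>k\<ge>m. C k \<subseteq> fst (Fs k) \<and> \<alpha> k ` C (Suc k) = C k)"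

definition threads_through :: "nat \<Rightarrow> (nat \<Rightarrow> nat set) \<Rightarrow> (nat \<Rightarrow> nat) set" where
  "threads_through m C = {x \<in> limV. \<forall>k\<ge>m. x k \<in> C k}"

lemma closed_threads_through: "closed (threads_through m C)"
proof -
  have "threads_through m C = limV \<inter> (\<Inter>k\<in>{m..}. {x. x k \<in> C k})"
    by (auto simp: threads_through_def)
  then show ?thesis
    using closed_limV closed_coordinate_preimage by (auto intro!: closed_INT closed_Int)
qed

lemma surjective_subsystemD:
  assumes "surjective_subsystem m C" "m \<le> k"
  shows "C k \<subseteq> fst (Fs k)" "\<alpha> k ` C (Suc k) = C k"
  using assms unfolding surjective_subsystem_def by auto

lemma bond_compatible_subsystem:
  assumes "surjective_subsystem m C"
  shows "bond_compatible (\<lambda>n a b. m \<le> n \<longrightarrow> a \<in> C n)"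
  unfolding bond_compatible_def
proof (intro allI impI)
  fix n a b
  assume "m \<le> Suc n \<longrightarrow> a \<in> C (Suc n)" "m \<le> n"
  then have "\<alpha> n a \<in> \<alpha> n ` C (Suc n)"
    by simp
  then show "\<alpha> n a \<in> C n"
    using surjective_subsystemD(2)[OF assms \<open>m \<le> n\<close>] by simp
qed

lemma exists_thread_from:
  assumes C: "surjective_subsystem m C" and "m \<le> k" "c \<in> C k"
  shows "\<exists>x\<in>limV. x k = c \<and> (\<forall>n\<ge>k. x n \<in> C n)"
proof -
  have "\<exists>f. \<forall>i. (f i \<in> C (k + i) \<and> (i = 0 \<longrightarrow> f i = c)) \<and> \<alpha> (k + i) (f (Suc i)) = f i"
  proof (rule dependent_nat_choice)
    show "\<exists>z. z \<in> C (k + 0) \<and> (0 = (0::nat) \<longrightarrow> z = c)"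
      using assms(3) by simp
  next
    fix z i
    assume "z \<in> C (k + i) \<and> (i = 0 \<longrightarrow> z = c)"
    then have "z \<in> \<alpha> (k + i) ` C (Suc (k + i))"
      using surjective_subsystemD(2)[OF C, of "k + i"] assms(2) by simp
    then show "\<exists>w. (w \<in> C (k + Suc i) \<and> (Suc i = 0 \<longrightarrow> w = c)) \<and> \<alpha> (k + i) w = z"
      by auto
  qed
  then obtain f where fC: "\<And>i. f i \<in> C (k + i)" and f0: "f 0 = c"
    and f_bond: "\<And>i. \<alpha> (k + i) (f (Suc i)) = f i"
    by blast
  have "\<exists>x\<in>limV. \<forall>n\<ge>k. x n = f (n - k)"
  proof (rule exists_thread_extending)
    fix n
    assume "k \<le> n"
    then show "f (n - k) \<in> fst (Fs n)"
      using fC[of "n - k"] surjective_subsystemD(1)[OF C, of n] assms(2) by auto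
    have "Suc n - k = Suc (n - k)" "k + (n - k) = n"
      using \<open>k \<le> n\<close> by simp_all
    then show "\<alpha> n (f (Suc n - k)) = f (n - k)"
      using f_bond[of "n - k"] by simp
  qed
  then obtain x where x: "x \<in> limV" "\<And>n. k \<le> n \<Longrightarrow> x n = f (n - k)"
    by blast
  have "x n \<in> C n" if "k \<le> n" for n
    using x(2)[OF that] fC[of "n - k"] that by simp
  moreover have "x k = c"
    using x(2)[of k] f0 by simp
  ultimately show ?thesis
    using x(1) by blast
qed

lemma projection_threads_through:
  assumes C: "surjective_subsystem m C" and "m \<le> k"
  shows "(\<lambda>x. x k) ` threads_through m C = C k"
proof
  show "(\<lambda>x. x k) ` threads_through m C \<subseteq> C k"
    using assms(2) by (auto simp: threads_through_def)
  show "C k \<subseteq> (\<lambda>x. x k) ` threads_through m C"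
  proof
    fix c
    assume "c \<in> C k"
    then obtain x where x: "x \<in> limV" "x k = c" "\<forall>n\<ge>k. x n \<in> C n"
      using exists_thread_from[OF C assms(2)] by blast
    have "m \<le> n \<longrightarrow> x n \<in> C n" for n
    proof (cases "k \<le> n")
      case True
      then show ?thesis
        using x(3) by simp
    next
      case False
      have "m \<le> k \<longrightarrow> x k \<in> C k"
        using x(3) by simp
      then show ?thesis
        using thread_related_down[OF bond_compatible_subsystem[OF C] x(1) x(1), of k n] False by simp
    qed
    then have "x \<in> threads_through m C"
      using x(1) by (simp add: threads_through_def)
    then show "c \<in> (\<lambda>x. x k) ` threads_through m C"
      using x(2) by (metis image_eqI)
  qed
qed

lemma limit_threads_related:
  assumes R: "bond_compatible R"
    and "\<And>t. A t \<in> limV" "\<And>t. B t \<in> limV" "\<And>t. R t (A t t) (B t t)"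
    and "strict_mono r" "(A \<circ> r) \<longlonglongrightarrow> a" "(B \<circ> r) \<longlonglongrightarrow> b"
  shows "R j (a j) (b j)"
proof -
  have "eventually (\<lambda>t. A (r t) j = a j \<and> B (r t) j = b j) sequentially"
    using eventually_conj[OF tendsto_coordinate_eventually[OF assms(6)]
        tendsto_coordinate_eventually[OF assms(7)]] by simp
  then obtain t where t: "A (r t) j = a j" "B (r t) j = b j" "j \<le> t"
    unfolding eventually_sequentially by (meson nat_le_linear)
  have "j \<le> r t"
    using t(3) seq_suble[OF assms(5), of t] by simp
  then have "R j (A (r t) j) (B (r t) j)"
    by (rule thread_related_down[OF R assms(2,3) assms(4)])
  then show ?thesis
    using t by simp
qed

lemma compact_threads_related:
  assumes "compact P" "compact Q" "P \<subseteq> limV" "Q \<subseteq> limV" and R: "bond_compatible R"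
    and unbounded: "\<And>N. \<exists>n\<ge>N. \<exists>a\<in>P. \<exists>b\<in>Q. R n (a n) (b n)"
  shows "\<exists>a\<in>P. \<exists>b\<in>Q. \<forall>j. R j (a j) (b j)"
proof -
  have "\<forall>N. \<exists>a. a \<in> P \<and> (\<exists>b\<in>Q. R N (a N) (b N))"
  proof
    fix N
    obtain n a b where "N \<le> n" "a \<in> P" "b \<in> Q" "R n (a n) (b n)"
      using unbounded[of N] by blast
    then show "\<exists>a. a \<in> P \<and> (\<exists>b\<in>Q. R N (a N) (b N))"
      using thread_related_down[OF R, of a b n N] assms(3,4) by blast
  qed
  from choice[OF this] obtain A where "\<forall>t. A t \<in> P \<and> (\<exists>b\<in>Q. R t (A t t) (b t))" ..
  then have "\<forall>t. \<exists>b. A t \<in> P \<and> b \<in> Q \<and> R t (A t t) (b t)"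
    by blast
  from choice[OF this] obtain B where "\<forall>t. A t \<in> P \<and> B t \<in> Q \<and> R t (A t t) (B t t)" ..
  then have AB: "A t \<in> P" "B t \<in> Q" "R t (A t t) (B t t)" for t
    by blast+
  obtain a b r where ab: "a \<in> P" "b \<in> Q"
    and r: "strict_mono r" "(A \<circ> r) \<longlonglongrightarrow> a" "(B \<circ> r) \<longlonglongrightarrow> b"
    by (rule seq_compact_pair[OF assms(1,2) AB(1,2)])
  have AB_limV: "A t \<in> limV" "B t \<in> limV" for t
    using AB(1,2) assms(3,4) by blast+
  have "R j (a j) (b j)" for j
    using limit_threads_related[where A = A and B = B, OF R AB_limV AB(3) r] .
  with ab show ?thesis
    by blast
qed

lemma disjoint_compact_threads_separated:
  assumes "compact P" "compact Q" "P \<subseteq> limV" "Q \<subseteq> limV" "P \<inter> Q = {}"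
  obtains n where "\<And>k. n \<le> k \<Longrightarrow> (\<lambda>x. x k) ` P \<inter> (\<lambda>x. x k) ` Q = {}"
proof -
  have "\<exists>n. \<forall>a\<in>P. \<forall>b\<in>Q. a n \<noteq> b n"
  proof (rule ccontr)
    assume "\<not> ?thesis"
    then have "\<exists>n\<ge>N. \<exists>a\<in>P. \<exists>b\<in>Q. a n = b n" for N
      by blast
    then obtain a b where "a \<in> P" "b \<in> Q" "\<forall>j. a j = b j"
      using compact_threads_related[OF assms(1-4) bond_compatible_eq] by blast
    then show False
      using assms(5) by (metis disjoint_iff ext)
  qed
  then obtain n where n: "\<forall>a\<in>P. \<forall>b\<in>Q. a n \<noteq> b n"
    by blast
  have "(\<lambda>x. x k) ` P \<inter> (\<lambda>x. x k) ` Q = {}" if "n \<le> k" for k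
  proof (rule ccontr)
    assume "(\<lambda>x. x k) ` P \<inter> (\<lambda>x. x k) ` Q \<noteq> {}"
    then obtain a b where "a \<in> P" "b \<in> Q" "a k = b k"
      by auto
    moreover have "a n = b n"
      using thread_eq_down[of a b k n] assms(3,4) that calculation by blast
    ultimately show False
      using n by blast
  qed
  then show ?thesis
    using that by blast
qed

(* Above the level where a separation of L becomes visible, the connected projections of L give
   edges between the two sides; a limit of such pairs is an edge of the limit graph. *)
lemma g_connected_if_projections_g_connected:
  assumes "closed L" "L \<subseteq> limV"
    and conn: "\<And>k. m \<le> k \<Longrightarrow> g_connected (snd (Fs k)) ((\<lambda>x. x k) ` L)"
  shows "g_connected limE L"
proof (rule g_connectedI)
  fix P Q
  assume PQ: "P \<noteq> {}" "Q \<noteq> {}" "P \<inter> Q = {}" "L = P \<union> Q"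
    and cl: "closedin (top_of_set L) P" "closedin (top_of_set L) Q"
  have PV: "P \<subseteq> limV" "Q \<subseteq> limV"
    using PQ(4) assms(2) by blast+
  have "closed P" "closed Q"
    using cl closedin_closed_trans assms(1) by blast+
  then have cpt: "compact P" "compact Q"
    using PV by (simp_all add: compact_if_closed_subset_limV)
  obtain n where sep: "\<And>k. n \<le> k \<Longrightarrow> (\<lambda>x. x k) ` P \<inter> (\<lambda>x. x k) ` Q = {}"
    using disjoint_compact_threads_separated[OF cpt PV PQ(3)] by blast
  have "\<exists>k\<ge>N. \<exists>a\<in>P. \<exists>b\<in>Q. (a k, b k) \<in> snd (Fs k)" for N
  proof -
    define k where "k = max N (max m n)"
    have k: "N \<le> k" "m \<le> k" "n \<le> k"
      by (simp_all add: k_def)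
    have "(\<lambda>x. x k) ` P \<noteq> {}" "(\<lambda>x. x k) ` Q \<noteq> {}"
      using PQ(1,2) by simp_all
    moreover have "(\<lambda>x. x k) ` P \<inter> (\<lambda>x. x k) ` Q = {}"
      using sep k(3) .
    moreover have "(\<lambda>x. x k) ` L = (\<lambda>x. x k) ` P \<union> (\<lambda>x. x k) ` Q"
      using PQ(4) by (simp add: image_Un)
    ultimately have "\<exists>p\<in>(\<lambda>x. x k) ` P. \<exists>q\<in>(\<lambda>x. x k) ` Q. (p, q) \<in> snd (Fs k)"
      by (rule g_connected_discreteD[OF conn[OF k(2)]])
    then show ?thesis
      using k(1) by blast
  qed
  then obtain a b where "a \<in> P" "b \<in> Q" "\<forall>j. (a j, b j) \<in> snd (Fs j)"
    using compact_threads_related[OF cpt PV bond_compatible_edge] by blast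
  moreover have "(a, b) \<in> limE"
    using calculation PV unfolding inv_lim_E_def by blast
  ultimately show "\<exists>p\<in>P. \<exists>q\<in>Q. (p, q) \<in> limE"
    by blast
qed

lemma g_connected_threads_through:
  assumes "surjective_subsystem m C" "\<And>k. m \<le> k \<Longrightarrow> g_connected (snd (Fs k)) (C k)"
  shows "g_connected limE (threads_through m C)"
proof (rule g_connected_if_projections_g_connected)
  show "closed (threads_through m C)"
    by (rule closed_threads_through)
  show "threads_through m C \<subseteq> limV"
    by (auto simp: threads_through_def)
  show "g_connected (snd (Fs k)) ((\<lambda>x. x k) ` threads_through m C)" if "m \<le> k" for k
    using assms(2)[OF that] projection_threads_through[OF assms(1) that] by simp
qed

lemma g_connected_limV:
  assumes "\<And>n. g_connected (snd (Fs n)) (fst (Fs n))"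
  shows "g_connected limE limV"
proof -
  have "surjective_subsystem 0 (\<lambda>n. fst (Fs n))"
    by (simp add: surjective_subsystem_def bond_image)
  moreover have "threads_through 0 (\<lambda>n. fst (Fs n)) = limV"
    by (auto simp: threads_through_def inv_lim_V_def)
  ultimately show ?thesis
    using g_connected_threads_through[of 0 "\<lambda>n. fst (Fs n)"] assms by simp
qed

lemma g_connected_projection:
  assumes "K \<subseteq> limV" "g_connected limE K"
  shows "g_connected (snd (Fs m)) ((\<lambda>x. x m) ` K)"
proof (rule g_connected_continuous_image[OF _ _ assms(2)])
  show "continuous_on K (\<lambda>x. x m)"
    by (rule continuous_on_subset[OF continuous_on_product_coordinates]) simp
  show "(x m, y m) \<in> snd (Fs m)" if "(x, y) \<in> limE" for x y
    using that by (simp add: inv_lim_E_def)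
qed

lemma projection_subset_down:
  assumes "L \<subseteq> limV" "K \<subseteq> limV" "(\<lambda>x. x k) ` L \<subseteq> (\<lambda>x. x k) ` K" "j \<le> k"
  shows "(\<lambda>x. x j) ` L \<subseteq> (\<lambda>x. x j) ` K"
proof
  fix c
  assume "c \<in> (\<lambda>x. x j) ` L"
  then obtain a where a: "c = a j" "a \<in> L"
    by (rule imageE)
  have "a k \<in> (\<lambda>x. x k) ` L"
    using a(2) by (rule imageI)
  with assms(3) have "a k \<in> (\<lambda>x. x k) ` K"
    by (rule subsetD)
  then obtain b where b: "a k = b k" "b \<in> K"
    by (rule imageE)
  have "b j = a j"
    using thread_eq_down[of b a k j] a(2) b assms(1,2,4) by auto
  then show "c \<in> (\<lambda>x. x j) ` K"
    using a(1) b(2) by (simp add: rev_image_eqI)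
qed

lemma projection_eq_down:
  assumes "L \<subseteq> limV" "K \<subseteq> limV" "(\<lambda>x. x k) ` L = (\<lambda>x. x k) ` K" "j \<le> k"
  shows "(\<lambda>x. x j) ` L = (\<lambda>x. x j) ` K"
  using projection_subset_down[OF assms(1,2) _ assms(4)] projection_subset_down[OF assms(2,1) _ assms(4)]
    assms(3) by (simp add: subset_antisym)

section \<open>Connected approximants\<close>

definition lift_component :: "nat \<Rightarrow> nat set \<Rightarrow> (nat \<Rightarrow> nat) \<Rightarrow> nat set" where
  "lift_component k D q = g_component_of (snd (Fs (Suc k))) {y \<in> fst (Fs (Suc k)). \<alpha> k y \<in> D} (q (Suc k))"

lemma lift_component:
  assumes "confluent (Fs (Suc k)) (Fs k) (\<alpha> k)" "D \<subseteq> fst (Fs k)" "g_connected (snd (Fs k)) D"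
    and "q \<in> limV" "q k \<in> D"
  shows "lift_component k D q \<subseteq> fst (Fs (Suc k))" "g_connected (snd (Fs (Suc k))) (lift_component k D q)"
    and "q (Suc k) \<in> lift_component k D q" "\<alpha> k ` lift_component k D q = D"
proof -
  have q: "q (Suc k) \<in> {y \<in> fst (Fs (Suc k)). \<alpha> k y \<in> D}"
    using assms(4,5) thread_level thread_bond by simp
  show "lift_component k D q \<subseteq> fst (Fs (Suc k))"
    unfolding lift_component_def by (rule order_trans[OF g_component_of_subset]) auto
  show "g_connected (snd (Fs (Suc k))) (lift_component k D q)"
    unfolding lift_component_def by (rule g_connected_g_component_of)
  show "q (Suc k) \<in> lift_component k D q"
    unfolding lift_component_def using q by (rule g_component_of_refl)
  show "\<alpha> k ` lift_component k D q = D"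
    unfolding lift_component_def by (rule confluent_image_g_component_of[OF assms(1-3)]) (use q in simp_all)
qed

lemma exists_lifting_subsystem:
  assumes confluent: "\<And>n. confluent (Fs (Suc n)) (Fs n) (\<alpha> n)"
    and Q: "Q \<subseteq> fst (Fs m)" "g_connected (snd (Fs m)) Q"
    and q: "q \<in> limV" "q m \<in> Q"
  obtains C where "surjective_subsystem m C" "C m = Q"
    "\<And>k. m \<le> k \<Longrightarrow> g_connected (snd (Fs k)) (C k)" "\<And>k. m \<le> k \<Longrightarrow> q k \<in> C k"
proof -
  define D where "D = rec_nat Q (\<lambda>i Di. lift_component (m + i) Di q)"
  have D0: "D 0 = Q" and DS: "D (Suc i) = lift_component (m + i) (D i) q" for i
    by (simp_all add: D_def)
  have D: "D i \<subseteq> fst (Fs (m + i)) \<and> g_connected (snd (Fs (m + i))) (D i) \<and> q (m + i) \<in> D i" for i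
  proof (induction i)
    case 0
    show ?case
      using Q q by (simp add: D0)
  next
    case (Suc i)
    then show ?case
      using lift_component[where k = "m + i" and D = "D i", OF confluent _ _ q(1)] by (simp add: DS)
  qed
  have D_bond: "\<alpha> (m + i) ` D (Suc i) = D i" for i
    using D[of i] lift_component(4)[where k = "m + i" and D = "D i", OF confluent _ _ q(1)] by (simp add: DS)
  define C where "C k = D (k - m)" for k
  have "surjective_subsystem m C"
    unfolding surjective_subsystem_def
  proof (intro allI impI conjI)
    fix k
    assume "m \<le> k"
    then have "m + (k - m) = k" "Suc k - m = Suc (k - m)"
      by simp_all
    then show "C k \<subseteq> fst (Fs k)" "\<alpha> k ` C (Suc k) = C k"
      using D[of "k - m"] D_bond[of "k - m"] by (simp_all add: C_def)
  qed
  moreover have "g_connected (snd (Fs k)) (C k)" "q k \<in> C k" if "m \<le> k" for k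
    using D[of "k - m"] that by (simp_all add: C_def)
  ultimately show ?thesis
    using that D0 by (simp add: C_def)
qed

lemma exists_g_connected_lift:
  assumes confluent: "\<And>n. confluent (Fs (Suc n)) (Fs n) (\<alpha> n)"
    and Q: "Q \<subseteq> fst (Fs m)" "g_connected (snd (Fs m)) Q"
    and q: "q \<in> limV" "q m \<in> Q"
  shows "\<exists>L. L \<subseteq> limV \<and> closed L \<and> g_connected limE L \<and> q \<in> L \<and> (\<lambda>x. x m) ` L = Q"
proof -
  obtain C where C: "surjective_subsystem m C" "C m = Q"
    and C_conn: "\<And>k. m \<le> k \<Longrightarrow> g_connected (snd (Fs k)) (C k)" and qC: "\<And>k. m \<le> k \<Longrightarrow> q k \<in> C k"
    using exists_lifting_subsystem[OF confluent Q q] by blast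
  show ?thesis
  proof (intro exI conjI)
    show "threads_through m C \<subseteq> limV"
      by (auto simp: threads_through_def)
    show "closed (threads_through m C)"
      by (rule closed_threads_through)
    show "g_connected limE (threads_through m C)"
      using C(1) C_conn by (rule g_connected_threads_through)
    show "q \<in> threads_through m C"
      using q(1) qC by (simp add: threads_through_def)
    show "(\<lambda>x. x m) ` threads_through m C = Q"
      using projection_threads_through[OF C(1) order_refl] C(2) by simp
  qed
qed

lemma exists_connected_approximant:
  assumes confluent: "\<And>n. confluent (Fs (Suc n)) (Fs n) (\<alpha> n)"
    and K: "K \<subseteq> limV" "g_connected limE K" "p \<in> K" and q: "q \<in> limV"
  shows "\<exists>L. L \<subseteq> limV \<and> closed L \<and> g_connected limE L \<and> q \<in> L \<and>
    (\<forall>k\<le>n. q k = p k \<longrightarrow> (\<lambda>x. x k) ` L = (\<lambda>x. x k) ` K)"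
proof (cases "\<exists>k\<le>n. q k = p k")
  case True
  \<comment> \<open>qualified name: Lattices_Big declares a different ex_has_greatest_nat\<close>
  then obtain k where k: "k \<le> n \<and> q k = p k" and greatest: "\<forall>j. j \<le> n \<and> q j = p j \<longrightarrow> j \<le> k"
    using Nat.ex_has_greatest_nat[of "\<lambda>k. k \<le> n \<and> q k = p k" _ n] by blast
  have sub: "(\<lambda>x. x k) ` K \<subseteq> fst (Fs k)"
    using K(1) thread_level by blast
  have "q k \<in> (\<lambda>x. x k) ` K"
    using imageI[OF K(3), of "\<lambda>x. x k"] k by simp
  then obtain L where L: "L \<subseteq> limV" "closed L" "g_connected limE L" "q \<in> L"
    and proj: "(\<lambda>x. x k) ` L = (\<lambda>x. x k) ` K"
    using exists_g_connected_lift[OF confluent sub g_connected_projection[OF K(1,2)] q] by blast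
  have proj_down: "(\<lambda>x. x j) ` L = (\<lambda>x. x j) ` K" if "j \<le> n" "q j = p j" for j
    using projection_eq_down[OF L(1) K(1) proj] greatest that by blast
  show ?thesis
    by (intro exI[of _ L] conjI allI impI) (simp_all add: L proj_down)
next
  case False
  show ?thesis
    by (intro exI[of _ "{q}"] conjI allI impI)
      (use False q in \<open>simp_all add: closed_singleton_fun g_connected_singleton\<close>)
qed

lemma exists_level_dist_less:
  assumes d: "Metric_space limV d" "Metric_space.mtopology limV d = top_of_set limV" and "e > 0"
  shows "\<exists>N. \<forall>x\<in>limV. \<forall>y\<in>limV. x N = y N \<longrightarrow> d x y < e"
proof (rule ccontr)
  assume "\<not> ?thesis"
  then have "\<forall>N. \<exists>x\<in>limV. \<exists>y\<in>limV. x N = y N \<and> e \<le> d x y"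
    by (auto simp: not_less)
  then have "\<forall>N. \<exists>x. x \<in> limV \<and> (\<exists>y\<in>limV. x N = y N \<and> e \<le> d x y)"
    by blast
  from choice[OF this] obtain A where "\<forall>t. A t \<in> limV \<and> (\<exists>y\<in>limV. A t t = y t \<and> e \<le> d (A t) y)" ..
  then have "\<forall>t. \<exists>y. A t \<in> limV \<and> y \<in> limV \<and> A t t = y t \<and> e \<le> d (A t) y"
    by blast
  from choice[OF this] obtain B where "\<forall>t. A t \<in> limV \<and> B t \<in> limV \<and> A t t = B t t \<and> e \<le> d (A t) (B t)" ..
  then have AB: "A t \<in> limV" "B t \<in> limV" "A t t = B t t" "e \<le> d (A t) (B t)" for t
    by blast+
  obtain a b r where ab: "a \<in> limV" "b \<in> limV"
    and r: "strict_mono r" "(A \<circ> r) \<longlonglongrightarrow> a" "(B \<circ> r) \<longlonglongrightarrow> b"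
    by (rule seq_compact_pair[OF compact_limV compact_limV AB(1,2)])
  have "a j = b j" for j
    using limit_threads_related[where A = A and B = B, OF bond_compatible_eq AB(1,2) AB(3) r] .
  then have "b = a"
    by auto
  have "eventually (\<lambda>t. d ((A \<circ> r) t) a < e / 2) sequentially"
    by (rule Metric_space_eventually_dist_less[OF d _ ab(1) r(2)]) (use AB(1) \<open>e > 0\<close> in simp_all)
  moreover have "eventually (\<lambda>t. d ((B \<circ> r) t) a < e / 2) sequentially"
    by (rule Metric_space_eventually_dist_less[OF d _ ab(1)]) (use AB(2) r(3) \<open>b = a\<close> \<open>e > 0\<close> in \<open>simp_all add: o_def\<close>)
  ultimately obtain t where "d (A (r t)) a < e / 2" "d (B (r t)) a < e / 2"
    unfolding eventually_sequentially by (metis comp_apply nat_le_linear)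
  moreover have "d (A (r t)) (B (r t)) \<le> d (A (r t)) a + d (B (r t)) a"
    using Metric_space.triangle'[OF d(1)] AB(1,2) ab(1) by blast
  ultimately show False
    using AB(4)[of "r t"] by simp
qed

lemma hausdorff_dist_le_if_projection_eq:
  assumes "Metric_space limV d" and N: "\<forall>x\<in>limV. \<forall>y\<in>limV. x N = y N \<longrightarrow> d x y < e"
    and "L \<subseteq> limV" "K \<subseteq> limV" "L \<noteq> {}" "K \<noteq> {}" and proj: "(\<lambda>x. x N) ` L = (\<lambda>x. x N) ` K"
  shows "\<bar>hausdorff_dist d L K\<bar> \<le> e"
proof (rule hausdorff_dist_abs_le)
  show "0 \<le> d a b" for a b
    using Metric_space.nonneg[OF assms(1)] .
  show "\<forall>a\<in>L. \<exists>b\<in>K. d a b \<le> e"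
  proof
    fix a
    assume "a \<in> L"
    then have "a N \<in> (\<lambda>x. x N) ` K"
      using proj by (metis imageI)
    then obtain b where "a N = b N" "b \<in> K"
      by (rule imageE)
    then show "\<exists>b\<in>K. d a b \<le> e"
      using N \<open>a \<in> L\<close> assms(3,4) by (meson less_imp_le subsetD)
  qed
  show "\<forall>b\<in>K. \<exists>a\<in>L. d a b \<le> e"
  proof
    fix b
    assume "b \<in> K"
    then have "b N \<in> (\<lambda>x. x N) ` L"
      using proj by (metis imageI)
    then obtain a where "b N = a N" "a \<in> L"
      by (rule imageE)
    then show "\<exists>a\<in>L. d a b \<le> e"
      using N \<open>b \<in> K\<close> assms(3,4) by (metis less_imp_le subsetD)
  qed
qed (fact assms)+

lemma hausdorff_dist_tendsto_zero:
  fixes pn :: "nat \<Rightarrow> nat \<Rightarrow> nat"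
  assumes d: "Metric_space limV d" "Metric_space.mtopology limV d = top_of_set limV"
    and "pn \<longlonglongrightarrow> p" "K \<subseteq> limV" "K \<noteq> {}" "\<And>n. Kn n \<subseteq> limV" "\<And>n. Kn n \<noteq> {}"
    and proj: "\<And>n k. k \<le> n \<Longrightarrow> pn n k = p k \<Longrightarrow> (\<lambda>x. x k) ` Kn n = (\<lambda>x. x k) ` K"
  shows "(\<lambda>n. hausdorff_dist d (Kn n) K) \<longlonglongrightarrow> 0"
proof (rule LIMSEQ_I)
  fix e :: real
  assume "0 < e"
  then obtain N where N: "\<forall>x\<in>limV. \<forall>y\<in>limV. x N = y N \<longrightarrow> d x y < e / 2"
    using exists_level_dist_less[OF d, of "e / 2"] by auto
  obtain n0 where n0: "\<And>n. n0 \<le> n \<Longrightarrow> pn n N = p N"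
    using tendsto_coordinate_eventually[OF assms(3), of N] unfolding eventually_sequentially by blast
  have "norm (hausdorff_dist d (Kn n) K - 0) < e" if "max n0 N \<le> n" for n
  proof -
    have "(\<lambda>x. x N) ` Kn n = (\<lambda>x. x N) ` K"
      using proj n0 that by simp
    then have "\<bar>hausdorff_dist d (Kn n) K\<bar> \<le> e / 2"
      using hausdorff_dist_le_if_projection_eq[OF d(1) N assms(6,4,7,5)] by blast
    then show ?thesis
      using \<open>0 < e\<close> by simp
  qed
  then show "\<exists>no. \<forall>n\<ge>no. norm (hausdorff_dist d (Kn n) K - 0) < e"
    by blast
qed

lemma kelley_limV:
  assumes confluent: "\<And>n. confluent (Fs (Suc n)) (Fs n) (\<alpha> n)"
    and levels_connected: "\<And>n. g_connected (snd (Fs n)) (fst (Fs n))"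
  shows "kelley limV limE"
  unfolding kelley_def
proof (intro conjI allI impI)
  show "g_connected limE limV"
    using levels_connected by (rule g_connected_limV)
  fix d K p pn
  assume "Metric_space limV d \<and> Metric_space.mtopology limV d = top_of_set limV"
  then have d: "Metric_space limV d" "Metric_space.mtopology limV d = top_of_set limV"
    by simp_all
  assume "K \<subseteq> limV \<and> closedin (top_of_set limV) K \<and> g_connected limE K \<and> p \<in> K \<and>
    (\<forall>n. pn n \<in> limV) \<and> pn \<longlonglongrightarrow> p"
  then have K: "K \<subseteq> limV" "g_connected limE K" "p \<in> K" and pn: "\<And>n. pn n \<in> limV" "pn \<longlonglongrightarrow> p"
    by simp_all
  have "\<forall>n. \<exists>L. L \<subseteq> limV \<and> closed L \<and> g_connected limE L \<and> pn n \<in> L \<and>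
    (\<forall>k\<le>n. pn n k = p k \<longrightarrow> (\<lambda>x. x k) ` L = (\<lambda>x. x k) ` K)"
    using exists_connected_approximant[OF confluent K pn(1)] by blast
  from choice[OF this] obtain Kn where "\<forall>n. Kn n \<subseteq> limV \<and> closed (Kn n) \<and> g_connected limE (Kn n) \<and>
    pn n \<in> Kn n \<and> (\<forall>k\<le>n. pn n k = p k \<longrightarrow> (\<lambda>x. x k) ` Kn n = (\<lambda>x. x k) ` K)" ..
  then have Kn: "Kn n \<subseteq> limV" "closed (Kn n)" "g_connected limE (Kn n)" "pn n \<in> Kn n"
    and Kn_proj: "k \<le> n \<Longrightarrow> pn n k = p k \<Longrightarrow> (\<lambda>x. x k) ` Kn n = (\<lambda>x. x k) ` K" for n k
    by simp_all
  have "K \<noteq> {}" "Kn n \<noteq> {}" for n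
    using K(3) Kn(4) by blast+
  then have "(\<lambda>n. hausdorff_dist d (Kn n) K) \<longlonglongrightarrow> 0"
    by (intro hausdorff_dist_tendsto_zero[OF d pn(2) K(1) _ Kn(1) _ Kn_proj])
  moreover have "closedin (top_of_set limV) (Kn n)" for n
    using Kn(1,2) by (rule closed_subset)
  ultimately show "\<exists>Kn. (\<forall>n. Kn n \<subseteq> limV \<and> closedin (top_of_set limV) (Kn n) \<and> g_connected limE (Kn n) \<and>
      pn n \<in> Kn n) \<and> (\<lambda>n. hausdorff_dist d (Kn n) K) \<longlonglongrightarrow> 0"
    using Kn by blast
qed

end

theorem proposition6p5:
  fixes G :: "fgraph set"
    and M :: "fgraph \<Rightarrow> fgraph \<Rightarrow> (nat \<Rightarrow> nat) \<Rightarrow> bool"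
    and Fs :: "nat \<Rightarrow> fgraph"
    and \<alpha> :: "nat \<Rightarrow> nat \<Rightarrow> nat"
  assumes "proj_fraisse_family G M"
    and "\<forall>A\<in>G. g_connected (snd A) (fst A)"
    and "\<forall>B A f. M B A f \<longrightarrow> confluent B A f"
    and "is_proj_fraisse_limit G M Fs \<alpha>"
  shows "kelley (inv_lim_V Fs \<alpha>) (inv_lim_E Fs \<alpha>)"
proof -
  have bond: "M (Fs (Suc n)) (Fs n) (\<alpha> n)" for n
    using assms(4) unfolding is_proj_fraisse_limit_def by blast
  have level: "Fs n \<in> G" "finite (fst (Fs n))" for n
    using bond[of n] assms(1) unfolding proj_fraisse_family_def by blast+
  have confluent: "confluent (Fs (Suc n)) (Fs n) (\<alpha> n)" for n
    using bond assms(3) by blast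
  then interpret graph_inverse_system Fs \<alpha>
    using level(2) by unfold_locales (simp_all add: confluent_def)
  show ?thesis
    using confluent assms(2) level(1) by (intro kelley_limV) simp_all
qed

end
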